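(* Let $m\in\mathbb{N}$ and let $f\in C^m_{\mathrm{pol}}(\mathbb{R})$ be increasing, with $|f^{(n)}(x)|\lesssim1+|x|^p$ for all $n=0,1,\dots,m$. For $\lambda>0$ let $J_\lambda:=(I+\lambda f)^{-1}$ and $f_\lambda:=\lambda^{-1}(I-J_\lambda)$. Then: (i) $f_\lambda$ and $J_\lambda$ belong to $C^m(\mathbb{R})$; (ii) for $\lambda\le1$ there exists $q\in\mathbb{N}$, independent of $\lambda$, such that $|f^{(n)}_\lambda(x)|\lesssim1+|x|^q$ for all $n=0,1,\dots,m$ (with implicit constant independent of $\lambda$); (iii) $f^{(n)}_\lambda\to f^{(n)}$ pointwise as $\lambda\to0$, for $n=0,1,\dots,m$.
   Context: $f_\lambda$ is the Yosida approximation of the increasing function $f$ and $J_\lambda$ its resolvent. $C^m_{\mathrm{pol}}(\mathbb{R})$ is the space of $\phi\in C^m(\mathbb{R})$ with $\phi,\phi',\dots,\phi^{(m)}$ of polynomial growth. *)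

theory Defs
  imports "HOL-Analysis.Analysis"
begin

definition Cm :: "nat \<Rightarrow> (real \<Rightarrow> real) \<Rightarrow> bool" where
  "Cm m f \<longleftrightarrow> (\<forall>n<m. \<forall>x. ((deriv ^^ n) f) differentiable (at x))
                 \<and> continuous_on UNIV ((deriv ^^ m) f)"

definition resolvent :: "real \<Rightarrow> (real \<Rightarrow> real) \<Rightarrow> real \<Rightarrow> real" where
  "resolvent lam f y = (THE x. x + lam * f x = y)"

definition yosida :: "real \<Rightarrow> (real \<Rightarrow> real) \<Rightarrow> real \<Rightarrow> real" where
  "yosida lam f y = (y - resolvent lam f y) / lam"

end

theory Submission
  imports Defs
begin

text \<open>
  Since f is increasing, J_\<lambda> is a well-defined 1-Lipschitz map with
  J_\<lambda>' = 1 / (1 + \<lambda> f' \<circ> J_\<lambda>), and f_\<lambda> = f \<circ> J_\<lambda>.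
  Hence the derivative of G_\<lambda> \<circ> J_\<lambda> is (D G)_\<lambda> \<circ> J_\<lambda> with
  (D G)_\<lambda> = G_\<lambda>' / (1 + \<lambda> f'), so f_\<lambda>^(n) = (D^n f)_\<lambda> \<circ> J_\<lambda>.
  The operator D maps families that are C^k in y, with all derivatives jointly continuous in
  (\<lambda>, y) and polynomially bounded uniformly for \<lambda> \<in> [0, b], to such families of order k - 1.
  The uniform bounds then follow from |J_\<lambda> x| \<le> |x| + |f 0|, and the convergence from
  J_\<lambda> x \<rightarrow> x, joint continuity at \<lambda> = 0 and (D^n f)_0 = f^(n).
\<close>

lemma Cm_imp_continuous_deriv:
  assumes "Cm m f" and "n \<le> m"
  shows "continuous_on UNIV ((deriv ^^ n) f)"
proof (cases "n = m")
  case True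
  then show ?thesis using assms(1) unfolding Cm_def by blast
next
  case False
  then have "\<forall>x. (deriv ^^ n) f differentiable (at x)" using assms unfolding Cm_def by auto
  then show ?thesis
    by (simp add: differentiable_imp_continuous_on differentiable_on_def differentiable_at_withinI)
qed

lemma one_plus_powr_le_power:
  assumes "0 \<le> p"
  shows "1 + \<bar>x\<bar> powr p \<le> 2 * (1 + \<bar>x::real\<bar>) ^ nat \<lceil>p\<rceil>"
proof -
  have "\<bar>x\<bar> powr p \<le> (1 + \<bar>x\<bar>) powr p" by (rule powr_mono2) (use assms in auto)
  also have "\<dots> \<le> (1 + \<bar>x\<bar>) powr real (nat \<lceil>p\<rceil>)" by (rule powr_mono) linarith+
  also have "\<dots> = (1 + \<bar>x\<bar>) ^ nat \<lceil>p\<rceil>" by (rule powr_realpow) simp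
  moreover have "1 \<le> (1 + \<bar>x\<bar>) ^ nat \<lceil>p\<rceil>" by simp
  ultimately show ?thesis by linarith
qed

lemma one_plus_abs_power_le: "(1 + \<bar>x::real\<bar>) ^ q \<le> 2 ^ q * (1 + \<bar>x\<bar> ^ q)"
proof (cases "\<bar>x\<bar> \<le> 1")
  case True
  have "(1 + \<bar>x\<bar>) ^ q \<le> 2 ^ q" by (rule power_mono) (use True in simp_all)
  then show ?thesis by (simp add: ring_distribs add_increasing2)
next
  case False
  have "(1 + \<bar>x\<bar>) ^ q \<le> (2 * \<bar>x\<bar>) ^ q" by (rule power_mono) (use False in simp_all)
  also have "\<dots> \<le> 2 ^ q * (1 + \<bar>x\<bar> ^ q)" by (simp add: power_mult_distrib)
  finally show ?thesis .
qed

locale continuous_mono_fun =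
  fixes f :: "real \<Rightarrow> real"
  assumes mono_f: "mono f" and continuous_f: "continuous_on UNIV f"
begin

lemma mult_f_mono: "0 \<le> lam \<Longrightarrow> x1 \<le> x2 \<Longrightarrow> lam * f x1 \<le> lam * f x2"
  using mono_f by (simp add: monoD mult_left_mono)

lemma resolvent_equation_ex1:
  assumes lam: "0 \<le> lam"
  shows "\<exists>!x. x + lam * f x = y"
proof (rule ex_ex1I)
  define a where "a = y - lam * \<bar>f y\<bar>"
  define b where "b = y + lam * \<bar>f y\<bar>"
  have "a \<le> y" "y \<le> b" using lam by (simp_all add: a_def b_def)
  moreover have "a + lam * f a \<le> y"
    using mult_f_mono[OF lam \<open>a \<le> y\<close>] mult_left_mono[OF abs_ge_self lam, of "f y"]
    unfolding a_def by linarith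
  moreover have "y \<le> b + lam * f b"
    using mult_f_mono[OF lam \<open>y \<le> b\<close>] mult_left_mono[OF abs_ge_minus_self lam, of "f y"]
    unfolding b_def by linarith
  moreover have "continuous_on {a..b} (\<lambda>x. x + lam * f x)"
    using continuous_f by (intro continuous_intros) (auto intro: continuous_on_subset)
  ultimately show "\<exists>x. x + lam * f x = y"
    using IVT'[of "\<lambda>x. x + lam * f x" a y b] by auto
next
  have strict: "x1 + lam * f x1 < x2 + lam * f x2" if "x1 < x2" for x1 x2
    using mult_f_mono[OF lam, of x1 x2] that by linarith
  fix x1 x2
  assume "x1 + lam * f x1 = y" "x2 + lam * f x2 = y"
  then show "x1 = x2" using strict[of x1 x2] strict[of x2 x1] by (cases x1 x2 rule: linorder_cases) auto
qed

lemma resolvent_eq: "0 \<le> lam \<Longrightarrow> resolvent lam f y + lam * f (resolvent lam f y) = y"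
  unfolding resolvent_def by (rule theI') (rule resolvent_equation_ex1)

lemma resolvent_lipschitz:
  assumes lam: "0 \<le> lam"
  shows "\<bar>resolvent lam f y1 - resolvent lam f y2\<bar> \<le> \<bar>y1 - y2\<bar>"
proof -
  have "resolvent lam f y' - resolvent lam f y \<le> y' - y"
    if "resolvent lam f y \<le> resolvent lam f y'" for y y'
    using resolvent_eq[OF lam, of y] resolvent_eq[OF lam, of y'] mult_f_mono[OF lam that]
    by linarith
  then show ?thesis by (smt (verit))
qed

lemma continuous_on_resolvent: "0 \<le> lam \<Longrightarrow> continuous_on UNIV (resolvent lam f)"
  by (rule lipschitz_on_continuous_on[of 1], rule lipschitz_onI)
    (auto simp: dist_real_def resolvent_lipschitz)

lemma resolvent_dist:
  assumes lam: "0 \<le> lam"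
  shows "\<bar>resolvent lam f y - y\<bar> \<le> lam * \<bar>f y\<bar>"
proof -
  let ?z = "resolvent lam f y"
  have eq: "y - ?z = lam * f ?z" using resolvent_eq[OF lam, of y] by linarith
  show ?thesis
  proof (cases "?z \<le> y")
    case True
    then show ?thesis
      using eq mult_f_mono[OF lam True] mult_left_mono[OF abs_ge_self lam, of "f y"] by linarith
  next
    case False
    then show ?thesis
      using eq mult_f_mono[OF lam, of y ?z] mult_left_mono[OF abs_ge_minus_self lam, of "f y"]
      by linarith
  qed
qed

lemma abs_resolvent_le: "0 \<le> lam \<Longrightarrow> \<bar>resolvent lam f y\<bar> \<le> \<bar>y\<bar> + lam * \<bar>f 0\<bar>"
  using resolvent_lipschitz[of lam y 0] resolvent_dist[of lam 0] by linarith

lemma one_plus_abs_resolvent_le: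
  assumes "0 \<le> lam" and "lam \<le> 1"
  shows "1 + \<bar>resolvent lam f y\<bar> \<le> (1 + \<bar>f 0\<bar>) * (1 + \<bar>y\<bar>)"
proof -
  have "lam * \<bar>f 0\<bar> \<le> \<bar>f 0\<bar>" using assms mult_right_mono[of lam 1 "\<bar>f 0\<bar>"] by simp
  moreover have "(1 + \<bar>f 0\<bar>) * (1 + \<bar>y\<bar>) = 1 + \<bar>y\<bar> + \<bar>f 0\<bar> + \<bar>f 0\<bar> * \<bar>y\<bar>"
    by (simp add: algebra_simps)
  moreover have "0 \<le> \<bar>f 0\<bar> * \<bar>y\<bar>" by simp
  ultimately show ?thesis using abs_resolvent_le[OF assms(1), of y] by linarith
qed

lemma resolvent_tendsto_ident: "((\<lambda>lam. resolvent lam f y) \<longlongrightarrow> y) (at_right 0)"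
proof (rule LIM_zero_cancel, rule tendsto_0_le[where K = "\<bar>f y\<bar>"])
  show "((\<lambda>lam. lam) \<longlongrightarrow> (0::real)) (at_right 0)" by (rule tendsto_ident_at)
  show "\<forall>\<^sub>F lam in at_right 0. norm (resolvent lam f y - y) \<le> norm lam * \<bar>f y\<bar>"
    using resolvent_dist by (auto simp: eventually_at_right_field intro: exI[of _ 1])
qed

lemma yosida_eq_comp_resolvent: "0 < lam \<Longrightarrow> yosida lam f = (\<lambda>y. f (resolvent lam f y))"
  using resolvent_eq[of lam] unfolding yosida_def by (auto simp: field_simps)

lemma deriv_f_nonneg:
  assumes "f differentiable (at x)"
  shows "0 \<le> deriv f x"
proof -
  have "(f has_real_derivative deriv f x) (at x)"
    using assms by (simp add: DERIV_deriv_iff_real_differentiable)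
  then show ?thesis using mono_on_imp_deriv_nonneg[of UNIV f] mono_f by (simp add: mono_on_def monoD)
qed

lemma has_real_derivative_resolvent:
  assumes lam: "0 \<le> lam" and diff: "f differentiable (at (resolvent lam f y))"
  shows "(resolvent lam f has_real_derivative 1 / (1 + lam * deriv f (resolvent lam f y))) (at y)"
proof -
  let ?J = "resolvent lam f"
  have "((\<lambda>x. x + lam * f x) has_real_derivative 1 + lam * deriv f (?J y)) (at (?J y))"
    using diff by (intro derivative_eq_intros) (auto simp: DERIV_deriv_iff_real_differentiable)
  moreover have "1 + lam * deriv f (?J y) \<noteq> 0"
    using deriv_f_nonneg[OF diff] lam by (smt (verit) mult_nonneg_nonneg)
  moreover have "isCont ?J y"
    using continuous_on_resolvent[OF lam] by (simp add: continuous_on_eq_continuous_at)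
  ultimately have "(?J has_real_derivative inverse (1 + lam * deriv f (?J y))) (at y)"
    using resolvent_eq[OF lam] by (intro DERIV_inverse_function[where a = "y - 1" and b = "y + 1"]) auto
  then show ?thesis by (simp add: inverse_eq_divide)
qed

end

definition poly_bounded_on :: "'a set \<Rightarrow> ('a \<Rightarrow> real \<Rightarrow> real) \<Rightarrow> bool" where
  "poly_bounded_on L G \<longleftrightarrow> (\<exists>C (q::nat). \<forall>l\<in>L. \<forall>y. \<bar>G l y\<bar> \<le> C * (1 + \<bar>y\<bar>) ^ q)"

lemma poly_bounded_onE:
  assumes "poly_bounded_on L G"
  obtains C q where "0 \<le> C" and "\<And>l y q'. l \<in> L \<Longrightarrow> q \<le> q' \<Longrightarrow> \<bar>G l y\<bar> \<le> C * (1 + \<bar>y\<bar>) ^ q'"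
proof -
  obtain C q where bound: "\<forall>l\<in>L. \<forall>y. \<bar>G l y\<bar> \<le> C * (1 + \<bar>y\<bar>) ^ q"
    using assms unfolding poly_bounded_on_def by blast
  have "\<bar>G l y\<bar> \<le> \<bar>C\<bar> * (1 + \<bar>y\<bar>) ^ q'" if "l \<in> L" "q \<le> q'" for l y q'
  proof -
    have "\<bar>G l y\<bar> \<le> C * (1 + \<bar>y\<bar>) ^ q" using bound that(1) by blast
    also have "\<dots> \<le> \<bar>C\<bar> * (1 + \<bar>y\<bar>) ^ q" by (rule mult_right_mono) auto
    also have "\<dots> \<le> \<bar>C\<bar> * (1 + \<bar>y\<bar>) ^ q'"
      by (intro mult_left_mono power_increasing) (use that in auto)
    finally show ?thesis .
  qed
  then show ?thesis using that[of "\<bar>C\<bar>" q] by auto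
qed

lemma poly_bounded_on_common_bound:
  assumes "poly_bounded_on A G" and "poly_bounded_on B H"
  obtains C q where "\<And>l y. l \<in> A \<Longrightarrow> \<bar>G l y\<bar> \<le> C * (1 + \<bar>y\<bar>) ^ q"
    and "\<And>l y. l \<in> B \<Longrightarrow> \<bar>H l y\<bar> \<le> C * (1 + \<bar>y\<bar>) ^ q"
proof -
  obtain C1 q1 where "0 \<le> C1" and G: "\<And>l y q'. l \<in> A \<Longrightarrow> q1 \<le> q' \<Longrightarrow> \<bar>G l y\<bar> \<le> C1 * (1 + \<bar>y\<bar>) ^ q'"
    using assms(1) by (rule poly_bounded_onE) blast
  obtain C2 q2 where "0 \<le> C2" and H: "\<And>l y q'. l \<in> B \<Longrightarrow> q2 \<le> q' \<Longrightarrow> \<bar>H l y\<bar> \<le> C2 * (1 + \<bar>y\<bar>) ^ q'"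
    using assms(2) by (rule poly_bounded_onE) blast
  show ?thesis
  proof (rule that)
    fix l y
    assume "l \<in> A"
    then have "\<bar>G l y\<bar> \<le> C1 * (1 + \<bar>y\<bar>) ^ (q1 + q2)" by (intro G) auto
    also have "\<dots> \<le> (C1 + C2) * (1 + \<bar>y\<bar>) ^ (q1 + q2)" using \<open>0 \<le> C2\<close> by (simp add: mult_right_mono)
    finally show "\<bar>G l y\<bar> \<le> (C1 + C2) * (1 + \<bar>y\<bar>) ^ (q1 + q2)" .
  next
    fix l y
    assume "l \<in> B"
    then have "\<bar>H l y\<bar> \<le> C2 * (1 + \<bar>y\<bar>) ^ (q1 + q2)" by (intro H) auto
    also have "\<dots> \<le> (C1 + C2) * (1 + \<bar>y\<bar>) ^ (q1 + q2)" using \<open>0 \<le> C1\<close> by (simp add: mult_right_mono)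
    finally show "\<bar>H l y\<bar> \<le> (C1 + C2) * (1 + \<bar>y\<bar>) ^ (q1 + q2)" .
  qed
qed

lemma poly_bounded_on_Un:
  assumes "poly_bounded_on A G" and "poly_bounded_on B G"
  shows "poly_bounded_on (A \<union> B) G"
proof -
  obtain C q where "\<And>l y. l \<in> A \<Longrightarrow> \<bar>G l y\<bar> \<le> C * (1 + \<bar>y\<bar>) ^ q"
    and "\<And>l y. l \<in> B \<Longrightarrow> \<bar>G l y\<bar> \<le> C * (1 + \<bar>y\<bar>) ^ q"
    using assms by (rule poly_bounded_on_common_bound) blast
  then show ?thesis unfolding poly_bounded_on_def by blast
qed

lemma poly_bounded_on_add:
  assumes "poly_bounded_on L G" and "poly_bounded_on L H"
  shows "poly_bounded_on L (\<lambda>l y. G l y + H l y)"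
proof -
  obtain C q where G: "\<And>l y. l \<in> L \<Longrightarrow> \<bar>G l y\<bar> \<le> C * (1 + \<bar>y\<bar>) ^ q"
    and H: "\<And>l y. l \<in> L \<Longrightarrow> \<bar>H l y\<bar> \<le> C * (1 + \<bar>y\<bar>) ^ q"
    using assms by (rule poly_bounded_on_common_bound) blast
  have "\<bar>G l y + H l y\<bar> \<le> (2 * C) * (1 + \<bar>y\<bar>) ^ q" if "l \<in> L" for l y
    using abs_triangle_ineq[of "G l y" "H l y"] G[OF that, of y] H[OF that, of y] by linarith
  then show ?thesis unfolding poly_bounded_on_def by blast
qed

lemma poly_bounded_on_mult:
  assumes "poly_bounded_on L G" and "poly_bounded_on L H"
  shows "poly_bounded_on L (\<lambda>l y. G l y * H l y)"
proof -
  obtain C1 q1 where "0 \<le> C1" and G: "\<And>l y. l \<in> L \<Longrightarrow> \<bar>G l y\<bar> \<le> C1 * (1 + \<bar>y\<bar>) ^ q1"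
    using assms(1) by (rule poly_bounded_onE) blast
  obtain C2 q2 where H: "\<And>l y. l \<in> L \<Longrightarrow> \<bar>H l y\<bar> \<le> C2 * (1 + \<bar>y\<bar>) ^ q2"
    using assms(2) by (rule poly_bounded_onE) blast
  have "\<bar>G l y * H l y\<bar> \<le> (C1 * C2) * (1 + \<bar>y\<bar>) ^ (q1 + q2)" if "l \<in> L" for l y
  proof -
    have "\<bar>G l y * H l y\<bar> \<le> (C1 * (1 + \<bar>y\<bar>) ^ q1) * (C2 * (1 + \<bar>y\<bar>) ^ q2)"
      unfolding abs_mult using G[OF that] H[OF that] \<open>0 \<le> C1\<close> by (intro mult_mono) auto
    then show ?thesis by (simp add: power_add mult_ac)
  qed
  then show ?thesis unfolding poly_bounded_on_def by blast
qed

lemma poly_bounded_on_Times: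
  assumes "finite I" and "\<And>i. i \<in> I \<Longrightarrow> poly_bounded_on L (G i)"
  shows "poly_bounded_on (I \<times> L) (\<lambda>(i, l). G i l)"
  using assms
proof (induction I rule: finite_induct)
  case empty
  then show ?case by (simp add: poly_bounded_on_def)
next
  case (insert i I)
  have "poly_bounded_on ({i} \<times> L) (\<lambda>(i, l). G i l)"
    using insert.prems[of i] unfolding poly_bounded_on_def by auto
  moreover have "poly_bounded_on (I \<times> L) (\<lambda>(i, l). G i l)"
    using insert.IH insert.prems by blast
  ultimately have "poly_bounded_on ({i} \<times> L \<union> I \<times> L) (\<lambda>(i, l). G i l)"
    by (rule poly_bounded_on_Un)
  moreover have "{i} \<times> L \<union> I \<times> L = insert i I \<times> L" by blast
  ultimately show ?case by simp
qed

fun Ck_family :: "'a::topological_space set \<Rightarrow> nat \<Rightarrow> ('a \<Rightarrow> real \<Rightarrow> real) \<Rightarrow> bool" where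
  "Ck_family L 0 G \<longleftrightarrow> continuous_on (L \<times> UNIV) (\<lambda>z. G (fst z) (snd z)) \<and> poly_bounded_on L G"
| "Ck_family L (Suc k) G \<longleftrightarrow>
     Ck_family L 0 G \<and> (\<forall>l\<in>L. \<forall>y. G l differentiable (at y)) \<and> Ck_family L k (\<lambda>l. deriv (G l))"

lemma Ck_family_0: "Ck_family L k G \<Longrightarrow> Ck_family L 0 G"
  by (cases k) auto

lemma Ck_family_SucD: "Ck_family L (Suc k) G \<Longrightarrow> Ck_family L k G"
  by (induction k arbitrary: G) auto

lemma Ck_family_cong:
  assumes "\<And>l. l \<in> L \<Longrightarrow> G l = H l" and "Ck_family L k G"
  shows "Ck_family L k H"
  using assms
proof (induction k arbitrary: G H)
  case 0
  have "continuous_on (L \<times> UNIV) (\<lambda>z. H (fst z) (snd z))"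
  proof (rule continuous_on_eq)
    show "continuous_on (L \<times> UNIV) (\<lambda>z. G (fst z) (snd z))" using 0(2) by simp
    show "G (fst z) (snd z) = H (fst z) (snd z)" if "z \<in> L \<times> UNIV" for z
      using 0(1) that by (simp add: mem_Times_iff)
  qed
  moreover have "poly_bounded_on L H"
    using 0 unfolding poly_bounded_on_def Ck_family.simps by metis
  ultimately show ?case by simp
next
  case (Suc k)
  have "Ck_family L k (\<lambda>l. deriv (H l))"
    by (rule Suc.IH[of "\<lambda>l. deriv (G l)"]) (use Suc.prems in simp_all)
  moreover have "Ck_family L k H"
    by (rule Suc.IH[of G]) (use Suc.prems Ck_family_SucD in blast)+
  then have "Ck_family L 0 H" by (rule Ck_family_0)
  moreover have "\<forall>l\<in>L. \<forall>y. H l differentiable (at y)" using Suc.prems by simp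
  ultimately show ?case by (simp only: Ck_family.simps)
qed

lemma Ck_family_add:
  "Ck_family L k G \<Longrightarrow> Ck_family L k H \<Longrightarrow> Ck_family L k (\<lambda>l y. G l y + H l y)"
proof (induction k arbitrary: G H)
  case 0
  then show ?case by (auto intro: continuous_on_add poly_bounded_on_add)
next
  case (Suc k)
  have "(\<lambda>y. deriv (G l) y + deriv (H l) y) = deriv (\<lambda>y. G l y + H l y)" if "l \<in> L" for l
    using Suc.prems that
    by (intro ext deriv_add[symmetric]) (auto simp: field_differentiable_def real_differentiable_def)
  moreover have "Ck_family L k (\<lambda>l y. deriv (G l) y + deriv (H l) y)"
    using Suc.prems by (intro Suc.IH) simp_all
  ultimately have "Ck_family L k (\<lambda>l. deriv (\<lambda>y. G l y + H l y))"
    by (rule Ck_family_cong)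
  moreover have "Ck_family L 0 (\<lambda>l y. G l y + H l y)"
    using Suc.prems by (auto intro: continuous_on_add poly_bounded_on_add)
  moreover have "\<forall>l\<in>L. \<forall>y. (\<lambda>y. G l y + H l y) differentiable (at y)"
    using Suc.prems by auto
  ultimately show ?case by (simp only: Ck_family.simps)
qed

lemma Ck_family_mult:
  "Ck_family L k G \<Longrightarrow> Ck_family L k H \<Longrightarrow> Ck_family L k (\<lambda>l y. G l y * H l y)"
proof (induction k arbitrary: G H)
  case 0
  then show ?case by (auto intro: continuous_on_mult poly_bounded_on_mult)
next
  case (Suc k)
  have "(\<lambda>y. deriv (G l) y * H l y + G l y * deriv (H l) y) = deriv (\<lambda>y. G l y * H l y)"
    if "l \<in> L" for l
    using Suc.prems that
    by (intro ext deriv_mult[symmetric]) (auto simp: field_differentiable_def real_differentiable_def)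
  moreover have "Ck_family L k (\<lambda>l y. deriv (G l) y * H l y + G l y * deriv (H l) y)"
    using Suc.prems by (intro Ck_family_add Suc.IH) (simp_all add: Ck_family_SucD)
  ultimately have "Ck_family L k (\<lambda>l. deriv (\<lambda>y. G l y * H l y))"
    by (rule Ck_family_cong)
  moreover have "Ck_family L 0 (\<lambda>l y. G l y * H l y)"
    using Suc.prems by (auto intro: continuous_on_mult poly_bounded_on_mult)
  moreover have "\<forall>l\<in>L. \<forall>y. (\<lambda>y. G l y * H l y) differentiable (at y)"
    using Suc.prems by auto
  ultimately show ?case by (simp only: Ck_family.simps)
qed

lemma Ck_family_const:
  assumes "continuous_on L c" and "\<And>l. l \<in> L \<Longrightarrow> \<bar>c l\<bar> \<le> B"
  shows "Ck_family L k (\<lambda>l y. c l)"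
  using assms
proof (induction k arbitrary: c B)
  case 0
  have "continuous_on (L \<times> UNIV) (\<lambda>z. c (fst z))"
    using 0 by (intro continuous_on_compose2[OF _ continuous_on_fst]) auto
  moreover have "poly_bounded_on L (\<lambda>l y. c l)"
    unfolding poly_bounded_on_def using 0 by (intro exI[of _ B] exI[of _ 0]) auto
  ultimately show ?case by simp
next
  case (Suc k)
  have const: "Ck_family L k (\<lambda>l y. c l)" using Suc.prems by (rule Suc.IH)
  have "Ck_family L k (\<lambda>l y. 0)" by (rule Suc.IH) auto
  then show ?case using Ck_family_0[OF const] by simp
qed

lemma Ck_family_ident: "Ck_family L k (\<lambda>l y. y)"
proof (induction k)
  case 0
  have "poly_bounded_on L (\<lambda>l y. y)"
    unfolding poly_bounded_on_def by (intro exI[of _ 1] exI[of _ 1]) auto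
  then show ?case by (auto intro: continuous_intros)
next
  case (Suc k)
  then show ?case using Ck_family_0[OF Suc.IH] Ck_family_const[of L "\<lambda>_. 1" 1 k] by simp
qed

locale yosida_setting =
  fixes f :: "real \<Rightarrow> real" and m :: nat
  assumes f_Cm: "Cm m f" and f_mono: "mono f"
    and f_poly_growth: "\<exists>C (q::nat). \<forall>n\<le>m. \<forall>x. \<bar>(deriv ^^ n) f x\<bar> \<le> C * (1 + \<bar>x\<bar>) ^ q"
begin

sublocale continuous_mono_fun f
  using f_mono Cm_imp_continuous_deriv[OF f_Cm, of 0] by unfold_locales simp_all

lemma differentiable_deriv_f: "n < m \<Longrightarrow> (deriv ^^ n) f differentiable (at x)"
  using f_Cm unfolding Cm_def by blast

lemma Ck_family_deriv_f: "j + k \<le> m \<Longrightarrow> Ck_family L k (\<lambda>l. (deriv ^^ j) f)"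
proof (induction k arbitrary: j)
  case 0
  obtain C and q :: nat where "\<forall>n\<le>m. \<forall>x. \<bar>(deriv ^^ n) f x\<bar> \<le> C * (1 + \<bar>x\<bar>) ^ q"
    using f_poly_growth by blast
  then have "poly_bounded_on L (\<lambda>l. (deriv ^^ j) f)"
    unfolding poly_bounded_on_def using 0 by (intro exI[of _ C] exI[of _ q]) simp
  moreover have "continuous_on (L \<times> UNIV) (\<lambda>z. (deriv ^^ j) f (snd z))"
    using Cm_imp_continuous_deriv[OF f_Cm] 0
    by (intro continuous_on_compose2[OF _ continuous_on_snd]) auto
  ultimately show ?case by simp
next
  case (Suc k)
  have "Ck_family L k (\<lambda>l. (deriv ^^ Suc j) f)" using Suc.prems by (intro Suc.IH) simp
  moreover have "Ck_family L k (\<lambda>l. (deriv ^^ j) f)" using Suc.prems by (intro Suc.IH) simp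
  moreover have "\<forall>l\<in>L. \<forall>y. (deriv ^^ j) f differentiable (at y)"
    using differentiable_deriv_f Suc.prems by simp
  ultimately show ?case using Ck_family_0 by simp
qed

lemma Ck_family_f: "Ck_family L m (\<lambda>l. f)"
  using Ck_family_deriv_f[of 0 m] by simp

definition resolvent_factor :: "real \<Rightarrow> real \<Rightarrow> real" where
  "resolvent_factor l y = 1 / (1 + l * deriv f y)"

lemma one_le_resolvent_denom: "1 \<le> m \<Longrightarrow> 0 \<le> l \<Longrightarrow> 1 \<le> 1 + l * deriv f y"
  using deriv_f_nonneg[of y] differentiable_deriv_f[of 0 y] by simp

lemma has_real_derivative_resolvent_factor:
  assumes "2 \<le> m" and "0 \<le> l"
  shows "(resolvent_factor l has_real_derivative
           - l * (deriv ^^ 2) f y * resolvent_factor l y * resolvent_factor l y) (at y)"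
proof -
  have "(deriv f has_real_derivative (deriv ^^ 2) f y) (at y)"
    using differentiable_deriv_f[of 1 y] assms
    by (simp add: DERIV_deriv_iff_real_differentiable numeral_2_eq_2)
  moreover have "1 + l * deriv f y \<noteq> 0" using one_le_resolvent_denom[of l y] assms by simp
  ultimately show ?thesis
    unfolding resolvent_factor_def[abs_def]
    by (auto intro!: derivative_eq_intros simp: power2_eq_square)
qed

lemma Ck_family_resolvent_factor:
  assumes "0 \<le> b" and "k < m"
  shows "Ck_family {0..b} k resolvent_factor"
  using assms(2)
proof (induction k)
  case 0
  have "\<bar>resolvent_factor l y\<bar> \<le> 1 * (1 + \<bar>y\<bar>) ^ 0" if "l \<in> {0..b}" for l y
    using one_le_resolvent_denom[of l y] 0 that by (simp add: resolvent_factor_def)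
  then have "poly_bounded_on {0..b} resolvent_factor"
    unfolding poly_bounded_on_def by blast
  moreover have "continuous_on ({0..b} \<times> UNIV) (\<lambda>z. 1 / (1 + fst z * deriv f (snd z)))"
  proof (intro continuous_intros ballI)
    show "continuous_on ({0..b} \<times> UNIV) (\<lambda>z. deriv f (snd z))"
      using Cm_imp_continuous_deriv[OF f_Cm, of 1] 0
      by (intro continuous_on_compose2[OF _ continuous_on_snd]) auto
    show "1 + fst z * deriv f (snd z) \<noteq> 0" if "z \<in> {0..b} \<times> UNIV" for z
      using one_le_resolvent_denom[of "fst z" "snd z"] 0 that by auto
  qed
  ultimately show ?case by (simp add: resolvent_factor_def[abs_def])
next
  case (Suc k)
  let ?D = "\<lambda>l y. - l * (deriv ^^ 2) f y * resolvent_factor l y * resolvent_factor l y"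
  have deriv: "(resolvent_factor l has_real_derivative ?D l y) (at y)" if "l \<in> {0..b}" for l y
    using has_real_derivative_resolvent_factor Suc.prems that by simp
  have factor: "Ck_family {0..b} k resolvent_factor" using Suc by simp
  have "Ck_family {0..b} k ?D"
    using Suc.prems assms(1)
    by (intro Ck_family_mult Ck_family_const[of _ _ b] Ck_family_deriv_f factor)
      (auto intro: continuous_intros)
  moreover have "?D l = deriv (resolvent_factor l)" if "l \<in> {0..b}" for l
    using deriv[OF that] by (intro ext DERIV_imp_deriv[symmetric])
  ultimately have "Ck_family {0..b} k (\<lambda>l. deriv (resolvent_factor l))"
    by (rule Ck_family_cong[rotated])
  moreover have "\<forall>l\<in>{0..b}. \<forall>y. resolvent_factor l differentiable (at y)"
    using deriv real_differentiable_def by blast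
  ultimately show ?case using Ck_family_0[OF factor] by simp
qed

definition resolvent_chain :: "(real \<Rightarrow> real \<Rightarrow> real) \<Rightarrow> real \<Rightarrow> real \<Rightarrow> real" where
  "resolvent_chain G l y = deriv (G l) y * resolvent_factor l y"

lemma resolvent_chain_iter_at_0: "(resolvent_chain ^^ n) G 0 = (deriv ^^ n) (G 0)"
  by (induction n) (simp_all add: resolvent_chain_def resolvent_factor_def)

lemma Ck_family_resolvent_chain_iter:
  assumes "0 \<le> b" and "Ck_family {0..b} k G" and "k \<le> m" and "n \<le> k"
  shows "Ck_family {0..b} (k - n) ((resolvent_chain ^^ n) G)"
  using assms(4)
proof (induction n)
  case 0
  then show ?case using assms(2) by simp
next
  case (Suc n)
  have "k - n = Suc (k - Suc n)" using Suc.prems by simp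
  then have "Ck_family {0..b} (k - Suc n) (\<lambda>l. deriv ((resolvent_chain ^^ n) G l))"
    using Suc by simp
  moreover have "Ck_family {0..b} (k - Suc n) resolvent_factor"
    using Suc.prems assms by (intro Ck_family_resolvent_factor) auto
  ultimately show ?case
    unfolding funpow.simps comp_def resolvent_chain_def[abs_def] by (rule Ck_family_mult)
qed

lemma has_real_derivative_comp_resolvent:
  assumes "0 \<le> lam" and "lam \<le> b" and "Ck_family {0..b} (Suc k) G" and "1 \<le> m"
  shows "((\<lambda>y. G lam (resolvent lam f y)) has_real_derivative
           resolvent_chain G lam (resolvent lam f x)) (at x)"
proof -
  have "(resolvent lam f has_real_derivative resolvent_factor lam (resolvent lam f x)) (at x)"
    using has_real_derivative_resolvent[OF assms(1), of x]
      differentiable_deriv_f[of 0 "resolvent lam f x"] assms(4)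
    by (simp add: resolvent_factor_def)
  moreover have "G lam differentiable (at (resolvent lam f x))" using assms by simp
  ultimately show ?thesis
    unfolding resolvent_chain_def
    by (intro DERIV_chain2) (simp_all add: DERIV_deriv_iff_real_differentiable)
qed

lemma higher_deriv_comp_resolvent:
  assumes lam: "0 \<le> lam" "lam \<le> b" and G: "Ck_family {0..b} k G" and "k \<le> m" and "n \<le> k"
  shows "(deriv ^^ n) (\<lambda>y. G lam (resolvent lam f y))
           = (\<lambda>y. (resolvent_chain ^^ n) G lam (resolvent lam f y))"
  using assms(5)
proof (induction n)
  case 0
  then show ?case by simp
next
  case (Suc n)
  have "k - n = Suc (k - Suc n)" using Suc.prems by simp
  then have "Ck_family {0..b} (Suc (k - Suc n)) ((resolvent_chain ^^ n) G)"
    using Ck_family_resolvent_chain_iter[OF _ G \<open>k \<le> m\<close>, of n] lam Suc.prems by simp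
  then have "((\<lambda>y. (resolvent_chain ^^ n) G lam (resolvent lam f y)) has_real_derivative
               (resolvent_chain ^^ Suc n) G lam (resolvent lam f x)) (at x)" for x
    using has_real_derivative_comp_resolvent lam Suc.prems \<open>k \<le> m\<close> by simp
  then show ?case using Suc by (simp add: DERIV_imp_deriv ext)
qed

lemma Cm_comp_resolvent:
  assumes lam: "0 \<le> lam" "lam \<le> b" and G: "Ck_family {0..b} m G"
  shows "Cm m (\<lambda>y. G lam (resolvent lam f y))"
  unfolding Cm_def
proof (intro conjI allI impI)
  fix n x
  assume "n < m"
  then have "Ck_family {0..b} (Suc (m - Suc n)) ((resolvent_chain ^^ n) G)"
    using Ck_family_resolvent_chain_iter[OF _ G order_refl, of n] lam Suc_diff_Suc by fastforce
  then have "((\<lambda>y. (resolvent_chain ^^ n) G lam (resolvent lam f y)) has_real_derivative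
               (resolvent_chain ^^ Suc n) G lam (resolvent lam f x)) (at x)"
    using has_real_derivative_comp_resolvent lam \<open>n < m\<close> by simp
  then show "(deriv ^^ n) (\<lambda>y. G lam (resolvent lam f y)) differentiable (at x)"
    using higher_deriv_comp_resolvent[OF lam G order_refl] \<open>n < m\<close>
    by (simp add: real_differentiable_def) blast
next
  have "continuous_on ({0..b} \<times> UNIV) (\<lambda>z. (resolvent_chain ^^ m) G (fst z) (snd z))"
    using Ck_family_resolvent_chain_iter[OF _ G order_refl order_refl] lam by simp
  then have "continuous_on UNIV (\<lambda>y. (resolvent_chain ^^ m) G
      (fst (lam, resolvent lam f y)) (snd (lam, resolvent lam f y)))"
    by (rule continuous_on_compose2)
      (use lam continuous_on_resolvent[OF lam(1)] in \<open>auto intro: continuous_intros\<close>)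
  then show "continuous_on UNIV ((deriv ^^ m) (\<lambda>y. G lam (resolvent lam f y)))"
    using higher_deriv_comp_resolvent[OF lam G order_refl order_refl] by simp
qed

lemma Cm_resolvent: "0 < lam \<Longrightarrow> Cm m (resolvent lam f)"
  using Cm_comp_resolvent[of lam lam "\<lambda>l y. y", OF _ _ Ck_family_ident] by simp

lemma Cm_yosida: "0 < lam \<Longrightarrow> Cm m (yosida lam f)"
  using Cm_comp_resolvent[of lam lam "\<lambda>l. f", OF _ _ Ck_family_f]
  by (simp add: yosida_eq_comp_resolvent)

lemma higher_deriv_yosida:
  assumes "0 < lam" and "n \<le> m"
  shows "(deriv ^^ n) (yosida lam f) x = (resolvent_chain ^^ n) (\<lambda>l. f) lam (resolvent lam f x)"
  using higher_deriv_comp_resolvent[of lam lam m "\<lambda>l. f" n, OF _ _ Ck_family_f] assms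
  by (simp add: yosida_eq_comp_resolvent)

lemma higher_deriv_yosida_poly_bounded:
  "\<exists>q::nat. \<exists>C. \<forall>lam. 0 < lam \<and> lam \<le> 1 \<longrightarrow>
     (\<forall>n\<le>m. \<forall>x. \<bar>(deriv ^^ n) (yosida lam f) x\<bar> \<le> C * (1 + \<bar>x\<bar> ^ q))"
proof -
  have "poly_bounded_on ({..m} \<times> {0..1}) (\<lambda>(n, l). (resolvent_chain ^^ n) (\<lambda>l. f) l)"
  proof (rule poly_bounded_on_Times)
    fix n
    assume "n \<in> {..m}"
    then have "Ck_family {0..1} (m - n) ((resolvent_chain ^^ n) (\<lambda>l. f))"
      by (intro Ck_family_resolvent_chain_iter Ck_family_f) auto
    then show "poly_bounded_on {0..1} ((resolvent_chain ^^ n) (\<lambda>l. f))"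
      using Ck_family_0 by fastforce
  qed simp
  then obtain C q where "0 \<le> C" and bound: "\<And>z y q'. z \<in> {..m} \<times> {0..1} \<Longrightarrow> q \<le> q' \<Longrightarrow>
      \<bar>(\<lambda>(n, l). (resolvent_chain ^^ n) (\<lambda>l. f) l) z y\<bar> \<le> C * (1 + \<bar>y\<bar>) ^ q'"
    by (rule poly_bounded_onE) blast
  let ?C = "C * (1 + \<bar>f 0\<bar>) ^ q * 2 ^ q"
  have "\<bar>(deriv ^^ n) (yosida lam f) x\<bar> \<le> ?C * (1 + \<bar>x\<bar> ^ q)"
    if lam: "0 < lam" "lam \<le> 1" and "n \<le> m" for lam n x
  proof -
    have "\<bar>(deriv ^^ n) (yosida lam f) x\<bar> \<le> C * (1 + \<bar>resolvent lam f x\<bar>) ^ q"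
      using higher_deriv_yosida[OF lam(1) \<open>n \<le> m\<close>] bound[of "(n, lam)" q] lam \<open>n \<le> m\<close>
      by simp
    also have "\<dots> \<le> C * ((1 + \<bar>f 0\<bar>) * (1 + \<bar>x\<bar>)) ^ q"
      using one_plus_abs_resolvent_le lam \<open>0 \<le> C\<close> by (intro mult_left_mono power_mono) auto
    also have "\<dots> \<le> C * (1 + \<bar>f 0\<bar>) ^ q * (2 ^ q * (1 + \<bar>x\<bar> ^ q))"
      unfolding power_mult_distrib mult.assoc using \<open>0 \<le> C\<close> one_plus_abs_power_le
      by (intro mult_left_mono) auto
    finally show ?thesis by (simp add: mult_ac)
  qed
  then show ?thesis by blast
qed

lemma higher_deriv_yosida_tendsto:
  assumes "n \<le> m"
  shows "((\<lambda>lam. (deriv ^^ n) (yosida lam f) x) \<longlongrightarrow> (deriv ^^ n) f x) (at_right 0)"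
proof -
  have small: "\<forall>\<^sub>F lam in at_right (0::real). 0 < lam \<and> lam \<le> 1"
    unfolding eventually_at_right_field by (intro exI[of _ 1]) auto
  have "Ck_family {0..1} (m - n) ((resolvent_chain ^^ n) (\<lambda>l. f))"
    using Ck_family_resolvent_chain_iter[OF _ Ck_family_f order_refl assms] by simp
  then have cont: "continuous_on ({0..1} \<times> UNIV)
      (\<lambda>z. (resolvent_chain ^^ n) (\<lambda>l. f) (fst z) (snd z))"
    using Ck_family_0 by fastforce
  have lim: "((\<lambda>lam. (lam, resolvent lam f x)) \<longlongrightarrow> (0, x)) (at_right 0)"
    by (intro tendsto_Pair tendsto_ident_at resolvent_tendsto_ident)
  have inside: "\<forall>\<^sub>F lam in at_right 0. (lam, resolvent lam f x) \<in> {0..1} \<times> UNIV"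
    using small by eventually_elim auto
  have "((\<lambda>lam. (resolvent_chain ^^ n) (\<lambda>l. f) (fst (lam, resolvent lam f x))
      (snd (lam, resolvent lam f x))) \<longlongrightarrow> (resolvent_chain ^^ n) (\<lambda>l. f) (fst (0::real, x))
      (snd (0::real, x))) (at_right 0)"
    by (rule continuous_on_tendsto_compose[OF cont lim _ inside]) simp
  then have "((\<lambda>lam. (resolvent_chain ^^ n) (\<lambda>l. f) lam (resolvent lam f x))
      \<longlongrightarrow> (deriv ^^ n) f x) (at_right 0)"
    by (simp add: resolvent_chain_iter_at_0)
  moreover have "\<forall>\<^sub>F lam in at_right 0.
      (resolvent_chain ^^ n) (\<lambda>l. f) lam (resolvent lam f x) = (deriv ^^ n) (yosida lam f) x"
    using small by eventually_elim (use higher_deriv_yosida assms in auto)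
  ultimately show ?thesis by (rule Lim_transform_eventually)
qed

end

theorem lemma4p4:
  fixes f :: "real \<Rightarrow> real" and m :: nat and p :: real
  assumes Cm_f: "Cm m f"
    and mono_f: "mono f"
    and p_nonneg: "p \<ge> 0"
    and growth: "\<exists>C. \<forall>n\<le>m. \<forall>x. \<bar>(deriv ^^ n) f x\<bar> \<le> C * (1 + \<bar>x\<bar> powr p)"
  shows "(\<forall>lam>0. Cm m (yosida lam f) \<and> Cm m (resolvent lam f))
    \<and> (\<exists>q::nat. \<exists>C. \<forall>lam. 0 < lam \<and> lam \<le> 1 \<longrightarrow>
          (\<forall>n\<le>m. \<forall>x. \<bar>(deriv ^^ n) (yosida lam f) x\<bar> \<le> C * (1 + \<bar>x\<bar> ^ q)))
    \<and> (\<forall>n\<le>m. \<forall>x. ((\<lambda>lam. (deriv ^^ n) (yosida lam f) x) \<longlongrightarrow> (deriv ^^ n) f x) (at_right 0))"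
proof -
  obtain C where C: "\<forall>n\<le>m. \<forall>x. \<bar>(deriv ^^ n) f x\<bar> \<le> C * (1 + \<bar>x\<bar> powr p)"
    using growth by blast
  have "0 \<le> C" using C[rule_format, of 0 0] by simp
  have "\<forall>n\<le>m. \<forall>x. \<bar>(deriv ^^ n) f x\<bar> \<le> (2 * C) * (1 + \<bar>x\<bar>) ^ nat \<lceil>p\<rceil>"
  proof (intro allI impI)
    fix n x
    assume "n \<le> m"
    then have "\<bar>(deriv ^^ n) f x\<bar> \<le> C * (1 + \<bar>x\<bar> powr p)" using C by blast
    also have "\<dots> \<le> C * (2 * (1 + \<bar>x\<bar>) ^ nat \<lceil>p\<rceil>)"
      by (rule mult_left_mono[OF one_plus_powr_le_power[OF p_nonneg] \<open>0 \<le> C\<close>])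
    finally show "\<bar>(deriv ^^ n) f x\<bar> \<le> (2 * C) * (1 + \<bar>x\<bar>) ^ nat \<lceil>p\<rceil>" by simp
  qed
  then interpret yosida_setting f m
    using Cm_f mono_f by unfold_locales blast+
  have "\<forall>lam>0. Cm m (yosida lam f) \<and> Cm m (resolvent lam f)"
    using Cm_yosida Cm_resolvent by blast
  moreover have "\<forall>n\<le>m. \<forall>x. ((\<lambda>lam. (deriv ^^ n) (yosida lam f) x) \<longlongrightarrow> (deriv ^^ n) f x) (at_right 0)"
    using higher_deriv_yosida_tendsto by blast
  ultimately show ?thesis using higher_deriv_yosida_poly_bounded by blast
qed

end
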